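(* Consider the 2-node network dynamical system \[ \dot x_1 = a_1x_1 + w_{12}(x_2-x_1) - w x_2^3 + w(x_1+x_2)^3,\qquad \dot x_2 = a_2x_2 + w_{21}(x_1-x_2) + w x_2^3, \] with $(x_1,x_2)\in\mathbb{R}^2$ and real parameters $a_1,a_2,w_{12},w_{21},w$, where $a_1\neq 0$, $a_2\neq0$, and the parameters satisfy \[ a_1-w_{12}+a_2-w_{21}=0,\qquad a_1a_2-a_1w_{21}-a_2w_{12}=0, \] so that the origin is a nilpotent equilibrium. If $w=0$, then the origin is unstable. On the other hand, if $a_1=-a_2=\alpha$ with $\alpha>0$ and $w<0$, then the origin is locally asymptotically stable.
   Context: An equilibrium $x^*$ of $\dot x=f(x)$ is called nilpotent if all eigenvalues of the Jacobian $\mathrm{D}_xf(x^* )$ are zero. The two displayed algebraic conditions are exactly the conditions that the linearization matrix at the origin has zero trace and zero determinant. *)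

theory Defs
  imports "HOL-Analysis.Analysis"
begin

text \<open>Autonomous ODE x' = f x on the plane, states as pairs (x1, x2) with the
  Euclidean norm.\<close>

definition is_solution :: "(real \<times> real \<Rightarrow> real \<times> real) \<Rightarrow> (real \<Rightarrow> real \<times> real) \<Rightarrow> real set \<Rightarrow> bool" where
  "is_solution f x I \<longleftrightarrow> (\<forall>t\<in>I. (x has_vector_derivative f (x t)) (at t within I))"

definition lyap_stable_origin :: "(real \<times> real \<Rightarrow> real \<times> real) \<Rightarrow> bool" where
  "lyap_stable_origin f \<longleftrightarrow>
     (\<forall>\<epsilon>>0. \<exists>\<delta>>0. \<forall>x T. 0 < T \<and> is_solution f x {0..<T} \<and> norm (x 0) < \<delta>
        \<longrightarrow> (\<forall>t\<in>{0..<T}. norm (x t) < \<epsilon>))"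

definition unstable_origin :: "(real \<times> real \<Rightarrow> real \<times> real) \<Rightarrow> bool" where
  "unstable_origin f \<longleftrightarrow> \<not> lyap_stable_origin f"

definition loc_asymp_stable_origin :: "(real \<times> real \<Rightarrow> real \<times> real) \<Rightarrow> bool" where
  "loc_asymp_stable_origin f \<longleftrightarrow> lyap_stable_origin f \<and>
     (\<exists>\<eta>>0. \<forall>x. is_solution f x {0..} \<and> norm (x 0) < \<eta> \<longrightarrow> (x \<longlongrightarrow> 0) at_top)"

definition net_field :: "real \<Rightarrow> real \<Rightarrow> real \<Rightarrow> real \<Rightarrow> real \<Rightarrow> real \<times> real \<Rightarrow> real \<times> real" where
  "net_field a1 a2 w12 w21 w = (\<lambda>(x1, x2).
     (a1 * x1 + w12 * (x2 - x1) - w * x2 ^ 3 + w * (x1 + x2) ^ 3,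
      a2 * x2 + w21 * (x1 - x2) + w * x2 ^ 3))"

end

theory Submission
  imports Defs
begin

text \<open>For \<open>w = 0\<close> the field is linear, and its matrix has zero trace and determinant, so by
  Cayley--Hamilton it squares to zero; being nonzero (as \<open>a1 \<noteq> 0\<close>), it has solutions
  \<open>p + t A p\<close> that leave every neighbourhood of the origin however small \<open>p\<close> is.

  For \<open>a1 = -a2 = \<alpha>\<close> the constraints force \<open>w12 = \<alpha>/2\<close> and \<open>w21 = -\<alpha>/2\<close>, and in the coordinates
  \<open>u = x1 + x2\<close>, \<open>v = x2\<close> the system becomes triangular: \<open>u' = w u\<^sup>3\<close>, \<open>v' = w v\<^sup>3 - (\<alpha>/2) u\<close>.
  For \<open>w < 0\<close>, \<open>|u|\<close> is nonincreasing and tends to \<open>0\<close>. The equation for \<open>v\<close> is a cubic decay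
  perturbed by a small term: once \<open>|v| \<ge> m\<close> and the perturbation is below \<open>-w m\<^sup>3/2\<close>, the
  square \<open>v\<^sup>2\<close> decreases at rate at least \<open>-w m\<^sup>4\<close>. Hence \<open>v\<close> stays small and tends to \<open>0\<close> as well.\<close>

lemma DERIV_barrier_le:
  fixes f f' :: "real \<Rightarrow> real"
  assumes "t1 \<le> t2"
    and deriv: "\<And>s. s \<in> {t1..t2} \<Longrightarrow> (f has_real_derivative f' s) (at s within {t1..t2})"
    and inward: "\<And>s. s \<in> {t1..t2} \<Longrightarrow> f s > M \<Longrightarrow> f' s \<le> 0"
    and "f t1 \<le> M"
  shows "f t2 \<le> M"
proof (rule ccontr)
  assume "\<not> f t2 \<le> M"
  then have "f t2 > M" by simp
  have "continuous_on {t1..t2} f"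
    using deriv by (meson DERIV_continuous continuous_on_eq_continuous_within)
  then have closed: "closed {s \<in> {t1..t2}. f s \<le> M}"
    by (intro continuous_on_closed_Collect_le continuous_on_const closed_atLeastAtMost)
  define s0 where "s0 = Sup {s \<in> {t1..t2}. f s \<le> M}"
  have bdd: "bdd_above {s \<in> {t1..t2}. f s \<le> M}"
    by (auto simp: bdd_above_def)
  have "s0 \<in> {s \<in> {t1..t2}. f s \<le> M}"
    unfolding s0_def using assms(1,4) by (intro closed_contains_Sup closed bdd) auto
  then have s0: "t1 \<le> s0" "s0 \<le> t2" "f s0 \<le> M" by auto
  \<comment> \<open>after the last time s0 at which f is at most M, f stays above M and so cannot increase\<close>
  have above: "f s > M" if "s \<in> {s0<..t2}" for s
    using that s0 cSup_upper[OF _ bdd, of s] by (force simp: s0_def)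
  have "s0 < t2"
    using s0 \<open>f t2 > M\<close> by (cases "s0 = t2") auto
  moreover have "(f has_derivative (\<lambda>h. f' s * h)) (at s within {s0..t2})" if "s \<in> {s0..t2}" for s
    using deriv[of s] that s0 by (auto simp: has_field_derivative_def intro: has_derivative_subset)
  ultimately obtain z where z: "z \<in> {s0<..<t2}" "f t2 - f s0 = f' z * (t2 - s0)"
    using mvt_simple[of s0 t2 f "\<lambda>s h. f' s * h"] by auto
  have "f' z \<le> 0"
    using inward[of z] above[of z] z(1) s0 by auto
  then have "f' z * (t2 - s0) \<le> 0"
    using \<open>s0 < t2\<close> by (simp add: mult_nonpos_nonneg)
  then have "f t2 \<le> f s0"
    using z(2) by simp
  then show False
    using s0 \<open>f t2 > M\<close> by simp
qed

lemma DERIV_eventually_le: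
  fixes f f' :: "real \<Rightarrow> real"
  assumes deriv: "\<And>s. s \<ge> t0 \<Longrightarrow> (f has_real_derivative f' s) (at s within {t0..})"
    and decay: "\<And>s. s \<ge> t0 \<Longrightarrow> f s > M \<Longrightarrow> f' s \<le> - k"
    and "k > 0"
  shows "eventually (\<lambda>t. f t \<le> M) at_top"
proof -
  define t1 where "t1 = t0 + (\<bar>f t0 - M\<bar> + 1) / k"
  have "t0 \<le> t1"
    using \<open>k > 0\<close> by (simp add: t1_def)
  have "\<exists>s\<in>{t0..t1}. f s \<le> M"
  proof (rule ccontr)
    assume "\<not> ?thesis"
    then have above: "f s > M" if "s \<in> {t0..t1}" for s
      using that by force
    have "(f has_derivative (\<lambda>h. f' s * h)) (at s within {t0..t1})" if "s \<in> {t0..t1}" for s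
      using deriv[of s] that by (auto simp: has_field_derivative_def intro: has_derivative_subset)
    then obtain z where z: "z \<in> {t0..t1}" "f t1 - f t0 = f' z * (t1 - t0)"
      using mvt_very_simple[OF \<open>t0 \<le> t1\<close>, of f "\<lambda>s h. f' s * h"] by auto
    have "f' z * (t1 - t0) \<le> - k * (t1 - t0)"
      using decay[of z] above[OF z(1)] z(1) \<open>t0 \<le> t1\<close> by (intro mult_right_mono) auto
    also have "\<dots> = - (\<bar>f t0 - M\<bar> + 1)"
      using \<open>k > 0\<close> by (simp add: t1_def)
    finally have "f t1 < M"
      using z(2) by linarith
    then show False
      using above[of t1] \<open>t0 \<le> t1\<close> by auto
  qed
  then obtain s where s: "s \<ge> t0" "f s \<le> M"
    by auto
  have "f t \<le> M" if "t \<ge> s" for t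
    using that s
    by (intro DERIV_barrier_le[of s t f f' M])
      (auto intro: DERIV_subset[OF deriv] decay[THEN order_trans] simp: \<open>k > 0\<close>[THEN less_imp_le])
  then show ?thesis
    unfolding eventually_at_top_linorder by blast
qed

lemma DERIV_square_perturbed_cubic:
  fixes v :: "real \<Rightarrow> real"
  assumes "(v has_real_derivative w * v t ^ 3 + g) (at t within S)"
  shows "((\<lambda>t. (v t)\<^sup>2) has_real_derivative 2 * v t * (w * v t ^ 3 + g)) (at t within S)"
  using DERIV_power[OF assms, of 2] by (simp add: ac_simps)

lemma perturbed_cubic_square_deriv_le:
  fixes w m v g :: real
  assumes "w < 0" and "\<bar>g\<bar> \<le> - w * m ^ 3 / 2" and "m \<le> \<bar>v\<bar>"
  shows "2 * v * (w * v ^ 3 + g) \<le> w * m ^ 4"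
proof -
  have "0 \<le> - w * m ^ 3"
    using assms(2) abs_ge_zero[of g] by linarith
  then have "0 \<le> m"
    using assms(1) by (simp add: mult_le_0_iff)
  have "2 * \<bar>g\<bar> \<le> - w * m ^ 3"
    using assms(2) by simp
  also have "\<dots> \<le> - w * \<bar>v\<bar> ^ 3"
    using assms(1,3) \<open>0 \<le> m\<close> by (intro mult_left_mono power_mono) auto
  finally have "2 * \<bar>g\<bar> \<le> - w * \<bar>v\<bar> ^ 3" .
  then have "\<bar>v\<bar> * (2 * \<bar>g\<bar>) \<le> \<bar>v\<bar> * (- w * \<bar>v\<bar> ^ 3)"
    by (rule mult_left_mono) simp
  moreover have "2 * v * g \<le> \<bar>v\<bar> * (2 * \<bar>g\<bar>)"
    using abs_ge_self[of "v * g"] by (simp add: abs_mult)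
  ultimately have "2 * v * g \<le> - w * \<bar>v\<bar> ^ 4"
    by (simp add: power_def numeral_eq_Suc algebra_simps)
  moreover have "w * \<bar>v\<bar> ^ 4 \<le> w * m ^ 4"
    using assms(1,3) \<open>0 \<le> m\<close> by (intro mult_left_mono_neg power_mono) auto
  moreover have "2 * v * (w * v ^ 3 + g) = 2 * w * \<bar>v\<bar> ^ 4 + 2 * v * g"
    by (simp add: algebra_simps power_def numeral_eq_Suc flip: power2_abs)
  ultimately show ?thesis
    by linarith
qed

lemma cubic_decay_abs_le:
  fixes u :: "real \<Rightarrow> real"
  assumes "w \<le> 0" and "s \<le> t"
    and deriv: "\<And>r. r \<in> {s..t} \<Longrightarrow> (u has_real_derivative w * u r ^ 3) (at r within {s..t})"
  shows "\<bar>u t\<bar> \<le> \<bar>u s\<bar>"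
proof -
  have "(u t)\<^sup>2 \<le> (u s)\<^sup>2"
  proof (rule DERIV_barrier_le[OF \<open>s \<le> t\<close>])
    fix r assume "r \<in> {s..t}"
    show "((\<lambda>t. (u t)\<^sup>2) has_real_derivative 2 * u r * (w * u r ^ 3 + 0)) (at r within {s..t})"
      using deriv[OF \<open>r \<in> {s..t}\<close>] by (intro DERIV_square_perturbed_cubic) simp
    have "2 * u r * (w * u r ^ 3 + 0) = 2 * w * ((u r)\<^sup>2)\<^sup>2"
      by (simp add: power_def numeral_eq_Suc algebra_simps)
    also have "\<dots> \<le> 0"
      using \<open>w \<le> 0\<close> by (rule_tac mult_nonpos_nonneg) auto
    finally show "2 * u r * (w * u r ^ 3 + 0) \<le> 0" .
  qed simp
  then show ?thesis
    by (simp add: abs_le_square_iff)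
qed

lemma perturbed_cubic_abs_le:
  fixes v g :: "real \<Rightarrow> real"
  assumes "w < 0" and "s \<le> t"
    and deriv: "\<And>r. r \<in> {s..t} \<Longrightarrow> (v has_real_derivative w * v r ^ 3 + g r) (at r within {s..t})"
    and small: "\<And>r. r \<in> {s..t} \<Longrightarrow> \<bar>g r\<bar> \<le> - w * m ^ 3 / 2"
  shows "\<bar>v t\<bar> \<le> max \<bar>v s\<bar> m"
proof -
  define M where "M = max \<bar>v s\<bar> m"
  have "0 \<le> M"
    by (simp add: M_def)
  have "(v t)\<^sup>2 \<le> M\<^sup>2"
  proof (rule DERIV_barrier_le[OF \<open>s \<le> t\<close>])
    fix r assume r: "r \<in> {s..t}"
    show "((\<lambda>t. (v t)\<^sup>2) has_real_derivative 2 * v r * (w * v r ^ 3 + g r)) (at r within {s..t})"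
      using deriv[OF r] by (rule DERIV_square_perturbed_cubic)
    assume "(v r)\<^sup>2 > M\<^sup>2"
    then have "M \<le> \<bar>v r\<bar>"
      using abs_le_square_iff[of M "v r"] \<open>0 \<le> M\<close> by simp
    then have "2 * v r * (w * v r ^ 3 + g r) \<le> w * m ^ 4"
      using perturbed_cubic_square_deriv_le[OF \<open>w < 0\<close> small[OF r]] by (simp add: M_def)
    also have "\<dots> \<le> 0"
      using \<open>w < 0\<close> by (simp add: mult_nonpos_nonneg)
    finally show "2 * v r * (w * v r ^ 3 + g r) \<le> 0" .
  qed (use abs_le_square_iff[of "v s" M] in \<open>simp add: M_def\<close>)
  then show ?thesis
    using abs_le_square_iff[of "v t" M] \<open>0 \<le> M\<close> by (simp add: M_def)
qed

lemma perturbed_cubic_eventually_abs_le: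
  fixes v g :: "real \<Rightarrow> real"
  assumes "w < 0" and "m > 0"
    and deriv: "\<And>r. r \<ge> a \<Longrightarrow> (v has_real_derivative w * v r ^ 3 + g r) (at r within {a..})"
    and small: "\<And>r. r \<ge> a \<Longrightarrow> \<bar>g r\<bar> \<le> - w * m ^ 3 / 2"
  shows "eventually (\<lambda>t. \<bar>v t\<bar> \<le> m) at_top"
proof -
  have "eventually (\<lambda>t. (v t)\<^sup>2 \<le> m\<^sup>2) at_top"
  proof (rule DERIV_eventually_le)
    fix r assume r: "r \<ge> a"
    show "((\<lambda>t. (v t)\<^sup>2) has_real_derivative 2 * v r * (w * v r ^ 3 + g r)) (at r within {a..})"
      using deriv[OF r] by (rule DERIV_square_perturbed_cubic)
    assume "(v r)\<^sup>2 > m\<^sup>2"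
    then have "\<bar>m\<bar> \<le> \<bar>v r\<bar>"
      unfolding abs_le_square_iff by simp
    then have "m \<le> \<bar>v r\<bar>"
      by simp
    then show "2 * v r * (w * v r ^ 3 + g r) \<le> - (- w * m ^ 4)"
      using perturbed_cubic_square_deriv_le[OF \<open>w < 0\<close> small[OF r]] by simp
  next
    show "0 < - w * m ^ 4"
      using assms(1,2) by (simp add: mult_neg_pos)
  qed
  then show ?thesis
    by eventually_elim (use \<open>m > 0\<close> in \<open>auto intro: power2_le_imp_le\<close>)
qed

lemma perturbed_cubic_tendsto_zero:
  fixes v g :: "real \<Rightarrow> real"
  assumes "w < 0"
    and deriv: "\<And>r. r \<ge> a \<Longrightarrow> (v has_real_derivative w * v r ^ 3 + g r) (at r within {a..})"
    and "(g \<longlongrightarrow> 0) at_top"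
  shows "(v \<longlongrightarrow> 0) at_top"
proof (rule tendstoI)
  fix e :: real assume "e > 0"
  define m where "m = e / 2"
  have "m > 0"
    using \<open>e > 0\<close> by (simp add: m_def)
  then have "eventually (\<lambda>r. dist (g r) 0 < - w * m ^ 3 / 2) at_top"
    using \<open>w < 0\<close> by (intro tendstoD[OF \<open>(g \<longlongrightarrow> 0) at_top\<close>]) (simp add: mult_neg_pos)
  then obtain b where small: "\<And>r. r \<ge> b \<Longrightarrow> \<bar>g r\<bar> \<le> - w * m ^ 3 / 2"
    unfolding eventually_at_top_linorder by (auto intro: less_imp_le)
  have "eventually (\<lambda>t. \<bar>v t\<bar> \<le> m) at_top"
  proof (rule perturbed_cubic_eventually_abs_le[OF \<open>w < 0\<close> \<open>m > 0\<close>, of "max a b"])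
    fix r assume "r \<ge> max a b"
    then show "(v has_real_derivative w * v r ^ 3 + g r) (at r within {max a b..})"
      using deriv[of r] by (auto intro: DERIV_subset)
    show "\<bar>g r\<bar> \<le> - w * m ^ 3 / 2"
      using small \<open>r \<ge> max a b\<close> by simp
  qed
  then show "eventually (\<lambda>t. dist (v t) 0 < e) at_top"
    by eventually_elim (use \<open>e > 0\<close> in \<open>simp add: m_def\<close>)
qed

lemma is_solution_subset: "is_solution f x I \<Longrightarrow> J \<subseteq> I \<Longrightarrow> is_solution f x J"
  unfolding is_solution_def by (meson has_vector_derivative_within_subset subsetD)

lemma is_solution_bounded_linear_image:
  assumes "is_solution f x I" and "bounded_linear L" and "t \<in> I"
  shows "((\<lambda>t. L (x t)) has_real_derivative L (f (x t))) (at t within I)"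
  using assms unfolding is_solution_def has_real_derivative_iff_has_vector_derivative
  by (simp add: bounded_linear.has_vector_derivative)

lemma net_field_antisymmetric_coordinates:
  assumes "is_solution (net_field \<alpha> (-\<alpha>) (\<alpha>/2) (-\<alpha>/2) w) x I" and "t \<in> I"
  shows "((\<lambda>t. fst (x t) + snd (x t)) has_real_derivative w * (fst (x t) + snd (x t)) ^ 3) (at t within I)"
    and "((\<lambda>t. snd (x t)) has_real_derivative w * snd (x t) ^ 3 + - (\<alpha>/2) * (fst (x t) + snd (x t))) (at t within I)"
proof -
  have "bounded_linear (\<lambda>p :: real \<times> real. fst p + snd p)"
    by (intro bounded_linear_add bounded_linear_fst bounded_linear_snd)
  from is_solution_bounded_linear_image[OF assms(1) this assms(2)]
  show "((\<lambda>t. fst (x t) + snd (x t)) has_real_derivative w * (fst (x t) + snd (x t)) ^ 3) (at t within I)"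
    by (rule DERIV_cong) (simp add: net_field_def case_prod_beta field_simps)
  from is_solution_bounded_linear_image[OF assms(1) bounded_linear_snd assms(2)]
  show "((\<lambda>t. snd (x t)) has_real_derivative w * snd (x t) ^ 3 + - (\<alpha>/2) * (fst (x t) + snd (x t))) (at t within I)"
    by (rule DERIV_cong) (simp add: net_field_def case_prod_beta field_simps)
qed

lemma net_field_antisymmetric_coordinates_bound:
  assumes "\<alpha> > 0" and "w < 0" and "0 \<le> t"
    and sol: "is_solution (net_field \<alpha> (-\<alpha>) (\<alpha>/2) (-\<alpha>/2) w) x {0..t}"
    and u0: "\<bar>fst (x 0) + snd (x 0)\<bar> \<le> - w * m ^ 3 / \<alpha>"
  shows "\<bar>fst (x t) + snd (x t)\<bar> \<le> \<bar>fst (x 0) + snd (x 0)\<bar>"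
    and "\<bar>snd (x t)\<bar> \<le> max \<bar>snd (x 0)\<bar> m"
proof -
  define u where "u = (\<lambda>r. fst (x r) + snd (x r))"
  define v where "v = (\<lambda>r. snd (x r))"
  have u_le: "\<bar>u r\<bar> \<le> \<bar>u 0\<bar>" if "r \<in> {0..t}" for r
  proof (rule cubic_decay_abs_le[where u = u and s = 0 and t = r])
    fix q assume "q \<in> {0..r}"
    have "is_solution (net_field \<alpha> (-\<alpha>) (\<alpha>/2) (-\<alpha>/2) w) x {0..r}"
      using that by (intro is_solution_subset[OF sol]) auto
    from net_field_antisymmetric_coordinates(1)[OF this \<open>q \<in> {0..r}\<close>]
    show "(u has_real_derivative w * u q ^ 3) (at q within {0..r})"
      by (simp add: u_def)
  qed (use that \<open>w < 0\<close> in auto)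
  then show "\<bar>fst (x t) + snd (x t)\<bar> \<le> \<bar>fst (x 0) + snd (x 0)\<bar>"
    using \<open>0 \<le> t\<close> by (simp add: u_def)
  have "\<bar>v t\<bar> \<le> max \<bar>v 0\<bar> m"
  proof (rule perturbed_cubic_abs_le[OF \<open>w < 0\<close> \<open>0 \<le> t\<close>, where g = "\<lambda>r. - (\<alpha>/2) * u r"])
    fix r assume "r \<in> {0..t}"
    show "(v has_real_derivative w * v r ^ 3 + - (\<alpha>/2) * u r) (at r within {0..t})"
      using net_field_antisymmetric_coordinates(2)[OF sol \<open>r \<in> {0..t}\<close>] by (simp add: u_def v_def)
    have "\<bar>u r\<bar> \<le> - w * m ^ 3 / \<alpha>"
      using u_le[OF \<open>r \<in> {0..t}\<close>] u0 by (simp add: u_def)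
    then have "\<alpha> / 2 * \<bar>u r\<bar> \<le> \<alpha> / 2 * (- w * m ^ 3 / \<alpha>)"
      using \<open>\<alpha> > 0\<close> by (intro mult_left_mono) auto
    then show "\<bar>- (\<alpha>/2) * u r\<bar> \<le> - w * m ^ 3 / 2"
      using \<open>\<alpha> > 0\<close> by (simp add: abs_mult)
  qed
  then show "\<bar>snd (x t)\<bar> \<le> max \<bar>snd (x 0)\<bar> m"
    by (simp add: v_def)
qed

lemma net_field_antisymmetric_lyap_stable:
  assumes "\<alpha> > 0" and "w < 0"
  shows "lyap_stable_origin (net_field \<alpha> (-\<alpha>) (\<alpha>/2) (-\<alpha>/2) w)"
  unfolding lyap_stable_origin_def
proof (intro allI impI)
  fix \<epsilon> :: real assume "\<epsilon> > 0"
  define m where "m = \<epsilon> / 4"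
  define c where "c = - w * m ^ 3 / \<alpha>"
  define \<delta> where "\<delta> = min (\<epsilon> / 8) (c / 2)"
  have "\<delta> > 0"
    using assms \<open>\<epsilon> > 0\<close> by (simp add: \<delta>_def c_def m_def mult_neg_pos divide_neg_pos)
  show "\<exists>\<delta>>0. \<forall>x T. 0 < T \<and> is_solution (net_field \<alpha> (-\<alpha>) (\<alpha>/2) (-\<alpha>/2) w) x {0..<T} \<and> norm (x 0) < \<delta>
          \<longrightarrow> (\<forall>t\<in>{0..<T}. norm (x t) < \<epsilon>)"
  proof (intro exI[of _ \<delta>] conjI \<open>\<delta> > 0\<close> allI impI ballI)
    fix x T t
    assume "0 < T \<and> is_solution (net_field \<alpha> (-\<alpha>) (\<alpha>/2) (-\<alpha>/2) w) x {0..<T} \<and> norm (x 0) < \<delta>"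
      and "t \<in> {0..<T}"
    then have sol: "is_solution (net_field \<alpha> (-\<alpha>) (\<alpha>/2) (-\<alpha>/2) w) x {0..t}"
      and "norm (x 0) < \<delta>"
      by (auto elim: is_solution_subset)
    then have x0: "\<bar>fst (x 0)\<bar> < \<delta>" "\<bar>snd (x 0)\<bar> < \<delta>"
      using norm_fst_le[of "fst (x 0)" "snd (x 0)"] norm_snd_le[of "snd (x 0)" "fst (x 0)"] by auto
    then have u0: "\<bar>fst (x 0) + snd (x 0)\<bar> < 2 * \<delta>"
      using abs_triangle_ineq[of "fst (x 0)" "snd (x 0)"] by linarith
    have "2 * \<delta> \<le> c" and "\<delta> \<le> \<epsilon> / 8"
      by (simp_all add: \<delta>_def)
    then have "\<bar>fst (x 0) + snd (x 0)\<bar> \<le> - w * m ^ 3 / \<alpha>"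
      using u0 unfolding c_def by linarith
    note bounds = net_field_antisymmetric_coordinates_bound[OF assms _ sol this]
    have "\<bar>fst (x t) + snd (x t)\<bar> < \<epsilon> / 4"
      using bounds(1) \<open>t \<in> {0..<T}\<close> u0 \<open>\<delta> \<le> \<epsilon> / 8\<close> by simp
    moreover have "\<bar>snd (x t)\<bar> \<le> \<epsilon> / 4"
      using bounds(2) \<open>t \<in> {0..<T}\<close> x0 \<open>\<delta> \<le> \<epsilon> / 8\<close> by (simp add: m_def max_def split: if_splits)
    moreover have "norm (x t) \<le> \<bar>fst (x t)\<bar> + \<bar>snd (x t)\<bar>"
      using norm_Pair_le[of "fst (x t)" "snd (x t)"] by simp
    ultimately show "norm (x t) < \<epsilon>"
      by linarith
  qed
qed

lemma net_field_antisymmetric_attractive: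
  assumes "w < 0" and sol: "is_solution (net_field \<alpha> (-\<alpha>) (\<alpha>/2) (-\<alpha>/2) w) x {0..}"
  shows "(x \<longlongrightarrow> 0) at_top"
proof -
  define u where "u = (\<lambda>r. fst (x r) + snd (x r))"
  define v where "v = (\<lambda>r. snd (x r))"
  have "(u \<longlongrightarrow> 0) at_top"
  proof (rule perturbed_cubic_tendsto_zero[OF \<open>w < 0\<close>, where a = 0 and g = "\<lambda>_. 0"])
    fix r :: real assume "r \<ge> 0"
    then show "(u has_real_derivative w * u r ^ 3 + 0) (at r within {0..})"
      using net_field_antisymmetric_coordinates(1)[OF sol, of r] by (simp add: u_def)
  qed simp
  then have "((\<lambda>r. - (\<alpha>/2) * u r) \<longlongrightarrow> 0) at_top"
    by (rule tendsto_mult_right_zero)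
  then have "(v \<longlongrightarrow> 0) at_top"
  proof (rule perturbed_cubic_tendsto_zero[OF \<open>w < 0\<close>, where a = 0, rotated])
    fix r :: real assume "r \<ge> 0"
    then show "(v has_real_derivative w * v r ^ 3 + - (\<alpha>/2) * u r) (at r within {0..})"
      using net_field_antisymmetric_coordinates(2)[OF sol, of r] by (simp add: u_def v_def)
  qed
  have "((\<lambda>r. (u r - v r, v r)) \<longlongrightarrow> (0 - 0, 0)) at_top"
    by (intro tendsto_Pair tendsto_diff \<open>(u \<longlongrightarrow> 0) at_top\<close> \<open>(v \<longlongrightarrow> 0) at_top\<close>)
  then show ?thesis
    by (simp add: u_def v_def zero_prod_def)
qed

lemma nilpotent_linear_solution:
  fixes L :: "real \<times> real \<Rightarrow> real \<times> real"
  assumes "linear L" and nil: "\<And>p. L (L p) = 0"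
  shows "is_solution L (\<lambda>t. p + t *\<^sub>R L p) I"
  unfolding is_solution_def
proof
  fix t
  have "L (p + t *\<^sub>R L p) = L p"
    using nil by (simp add: linear_add[OF \<open>linear L\<close>] linear_scale[OF \<open>linear L\<close>])
  moreover have "((\<lambda>t. p + t *\<^sub>R L p) has_vector_derivative L p) (at t within I)"
    by (auto intro!: derivative_eq_intros)
  ultimately show "((\<lambda>t. p + t *\<^sub>R L p) has_vector_derivative L (p + t *\<^sub>R L p)) (at t within I)"
    by simp
qed

lemma nilpotent_linear_unstable:
  fixes L :: "real \<times> real \<Rightarrow> real \<times> real"
  assumes "linear L" and "\<And>p. L (L p) = 0" and "L e \<noteq> 0"
  shows "unstable_origin L"
  unfolding unstable_origin_def lyap_stable_origin_def
proof
  assume "\<forall>\<epsilon>>0. \<exists>\<delta>>0. \<forall>x T. 0 < T \<and> is_solution L x {0..<T} \<and> norm (x 0) < \<delta>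
            \<longrightarrow> (\<forall>t\<in>{0..<T}. norm (x t) < \<epsilon>)"
  then obtain \<delta> where "\<delta> > 0" and bounded:
    "\<And>x T. 0 < T \<and> is_solution L x {0..<T} \<and> norm (x 0) < \<delta> \<Longrightarrow> \<forall>t\<in>{0..<T}. norm (x t) < 1"
    by (meson zero_less_one)
  define p where "p = (\<delta> / (2 * norm e)) *\<^sub>R e"
  have "e \<noteq> 0"
    using \<open>L e \<noteq> 0\<close> linear_0[OF \<open>linear L\<close>] by auto
  then have "norm p < \<delta>"
    using \<open>\<delta> > 0\<close> by (simp add: p_def)
  have "L p \<noteq> 0"
    using \<open>L e \<noteq> 0\<close> \<open>e \<noteq> 0\<close> \<open>\<delta> > 0\<close> by (simp add: p_def linear_scale[OF \<open>linear L\<close>])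
  define t where "t = (1 + norm p) / norm (L p)"
  have "t > 0"
    using \<open>L p \<noteq> 0\<close> by (simp add: t_def add_pos_nonneg)
  have "norm (p + t *\<^sub>R L p) < 1"
    using bounded[of "t + 1" "\<lambda>t. p + t *\<^sub>R L p"] \<open>t > 0\<close> \<open>norm p < \<delta>\<close>
      nilpotent_linear_solution[OF assms(1,2)] by simp
  moreover have "norm (t *\<^sub>R L p) = 1 + norm p"
    using \<open>L p \<noteq> 0\<close> \<open>t > 0\<close> by (simp add: t_def)
  ultimately show False
    using norm_triangle_ineq4[of "p + t *\<^sub>R L p" p] by simp
qed

lemma trace_det_zero_square_zero:
  fixes a b c d x y :: real
  assumes "a + d = 0" and "a * d - b * c = 0"
  shows "(a * (a * x + b * y) + b * (c * x + d * y), c * (a * x + b * y) + d * (c * x + d * y)) = 0"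
  unfolding zero_prod_def prod.inject using assms by algebra

lemma net_field_linear_unstable:
  assumes "a1 \<noteq> 0"
    and trace: "a1 - w12 + a2 - w21 = 0" and det: "a1 * a2 - a1 * w21 - a2 * w12 = 0"
  shows "unstable_origin (net_field a1 a2 w12 w21 0)"
proof -
  have "net_field a1 a2 w12 w21 0 (1, 0) \<noteq> 0 \<or> net_field a1 a2 w12 w21 0 (0, 1) \<noteq> 0"
    using \<open>a1 \<noteq> 0\<close> by (auto simp: net_field_def zero_prod_def)
  then obtain e where "net_field a1 a2 w12 w21 0 e \<noteq> 0"
    by blast
  moreover have "linear (net_field a1 a2 w12 w21 0)"
    by (rule linearI) (auto simp: net_field_def algebra_simps split: prod.splits)
  moreover have "net_field a1 a2 w12 w21 0 (net_field a1 a2 w12 w21 0 p) = 0" for p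
  proof -
    have "(a1 - w12) + (a2 - w21) = 0" and "(a1 - w12) * (a2 - w21) - w12 * w21 = 0"
      using trace det by (simp_all add: algebra_simps)
    from trace_det_zero_square_zero[OF this, of "fst p" "snd p"]
    show ?thesis
      by (simp add: net_field_def case_prod_beta algebra_simps)
  qed
  ultimately show ?thesis
    by (intro nilpotent_linear_unstable)
qed

theorem proposition1:
  fixes a1 a2 w12 w21 w :: real
  assumes "a1 \<noteq> 0" and "a2 \<noteq> 0"
    and "a1 - w12 + a2 - w21 = 0"
    and "a1 * a2 - a1 * w21 - a2 * w12 = 0"
  shows "(w = 0 \<longrightarrow> unstable_origin (net_field a1 a2 w12 w21 w))
       \<and> (\<forall>\<alpha>::real. a1 = \<alpha> \<and> a2 = - \<alpha> \<and> \<alpha> > 0 \<and> w < 0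
            \<longrightarrow> loc_asymp_stable_origin (net_field a1 a2 w12 w21 w))"
proof (intro conjI allI impI)
  assume "w = 0"
  then show "unstable_origin (net_field a1 a2 w12 w21 w)"
    using net_field_linear_unstable[OF assms(1,3,4)] by simp
next
  fix \<alpha> :: real
  assume "a1 = \<alpha> \<and> a2 = - \<alpha> \<and> \<alpha> > 0 \<and> w < 0"
  then have a: "a1 = \<alpha>" "a2 = - \<alpha>" and "\<alpha> > 0" "w < 0"
    by auto
  have "w21 = - w12"
    using assms(3) unfolding a by simp
  moreover have "\<alpha> * (2 * w12 - \<alpha>) = 0"
    using assms(4) \<open>w21 = - w12\<close> unfolding a by (simp add: algebra_simps)
  ultimately have couplings: "w12 = \<alpha> / 2" "w21 = - \<alpha> / 2"
    using \<open>\<alpha> > 0\<close> by auto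
  have "net_field a1 a2 w12 w21 w = net_field \<alpha> (- \<alpha>) (\<alpha> / 2) (- \<alpha> / 2) w"
    unfolding a couplings ..
  then show "loc_asymp_stable_origin (net_field a1 a2 w12 w21 w)"
    unfolding loc_asymp_stable_origin_def
    using net_field_antisymmetric_lyap_stable[OF \<open>\<alpha> > 0\<close> \<open>w < 0\<close>]
      net_field_antisymmetric_attractive[OF \<open>w < 0\<close>]
    by (metis zero_less_one)
qed

end
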